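(* Let $(\mathcal M,\mathcal A,\mathcal S,\sigma)$ be an ergodic learning system, $\pi_0\in\mathcal A^{\mathcal S}$ an initial d-policy and $\beta>0$. Run the following Gibbs sampler: enumerate $\mathcal S=\{s_1,\dots,s_{|\mathcal S|}\}$; for $t=0,1,\dots,N-1$, sample $n$ uniformly from $\{1,\dots,|\mathcal S|\}$, sample $a_t^n\sim\sigma^\beta\big(\sum_{m\neq n}\pi_t(s_m),s_n\big)$, and set $\pi_{t+1}(s_n)=a_t^n$ and $\pi_{t+1}(s_m)=\pi_t(s_m)$ for $m\neq n$. Then, as $N\to\infty$, $\pi_r$ converges in distribution to $\mathrm X^\beta$, where $r$ is drawn uniformly from $\{0,1,\dots,N\}$ independently of the chain.
   Context: A learning system is a quadruple $(\mathcal M,\mathcal A,\mathcal S,\sigma)$: $\langle\mathcal M,+\rangle$ a commutative monoid with identity $0$; $\mathcal A\subset\mathcal M$ a finite generating set; $\mathcal S$ a partition of $\mathcal A$ into nonempty contexts; $\sigma(\phi,s)$ a probability distribution on $s$ for each $(\phi,s)\in\mathcal M\times\mathcal S$, satisfying the chain rule $\sigma(\phi,s_1)(a_1)\sigma(\phi+a_1,s_2)(a_2)=\sigma(\phi,s_2)(a_2)\sigma(\phi+a_2,s_1)(a_1)$ for all $\phi\in\mathcal M$, $a_1\in s_1\in\mathcal S$, $a_2\in s_2\in\mathcal S$. A d-policy is $\pi:\mathcal S\to\mathcal A$ with $\pi(s)\in s$; $\mathcal A^{\mathcal S}$ is their set; sums of behaviors are taken in $\mathcal M$. Coherence: $\chi(\pi)=\sum_{n=1}^{|\mathcal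 S|}\log_2\sigma(\sum_{m<n}\pi(s_m),s_n)(\pi(s_n))$ (independent of the enumeration). Softmax over coherence: $\mathrm X^\beta$ is the probability distribution on $\mathcal A^{\mathcal S}$ with $\mathrm X^\beta(\pi)\propto 2^{\beta\chi(\pi)}$. For a distribution $p$ on a finite set, $\sigma^\beta$ denotes $p^\beta$ renormalized: $\sigma^\beta(\phi,s)(a)=\sigma(\phi,s)(a)^\beta/\sum_{a'\in s}\sigma(\phi,s)(a')^\beta$. The system is ergodic if for every nonempty proper subset $C\subsetneq\mathcal A^{\mathcal S}$ there exist $\pi\in C$, $\pi'\notin C$ agreeing on all contexts except one context $\dot s$, with $\sigma(\sum_{s\neq\dot s}\pi(s),\dot s)(\pi'(\dot s))>0$. *)

theory Defs
  imports "HOL-Probability.Probability"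
begin

(* The monoid M is the type 'm (class comm_monoid_add); A is a finite subset
   generating it; S is a partition of A into nonempty contexts; a context is a set
   of actions; sigma phi s a is the probability of action a in context s at phi. *)

inductive_set generated :: "'m::comm_monoid_add set \<Rightarrow> 'm set" for A where
  gen_zero: "0 \<in> generated A"
| gen_add: "x \<in> generated A \<Longrightarrow> a \<in> A \<Longrightarrow> x + a \<in> generated A"

definition learning_system ::
  "'m::comm_monoid_add set \<Rightarrow> 'm set set \<Rightarrow> ('m \<Rightarrow> 'm set \<Rightarrow> 'm \<Rightarrow> real) \<Rightarrow> bool" where
  "learning_system A S \<sigma> \<longleftrightarrow>
     finite A \<and> generated A = UNIV \<and>
     (\<Union>S) = A \<and> (\<forall>s\<in>S. s \<noteq> {}) \<and>
     (\<forall>s1\<in>S. \<forall>s2\<in>S. s1 \<noteq> s2 \<longrightarrow> s1 \<inter> s2 = {}) \<and>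
     (\<forall>\<phi> s. s \<in> S \<longrightarrow> (\<forall>a. \<sigma> \<phi> s a \<ge> 0) \<and> (\<forall>a. a \<notin> s \<longrightarrow> \<sigma> \<phi> s a = 0)
                         \<and> (\<Sum>a\<in>s. \<sigma> \<phi> s a) = 1) \<and>
     (\<forall>\<phi> s1 s2 a1 a2. s1 \<in> S \<longrightarrow> s2 \<in> S \<longrightarrow> a1 \<in> s1 \<longrightarrow> a2 \<in> s2 \<longrightarrow>
        \<sigma> \<phi> s1 a1 * \<sigma> (\<phi> + a1) s2 a2 = \<sigma> \<phi> s2 a2 * \<sigma> (\<phi> + a2) s1 a1)"

definition dpolicies :: "'m set set \<Rightarrow> ('m set \<Rightarrow> 'm) set" where
  "dpolicies S = (\<Pi>\<^sub>E s\<in>S. s)"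

definition ergodic ::
  "'m::comm_monoid_add set set \<Rightarrow> ('m \<Rightarrow> 'm set \<Rightarrow> 'm \<Rightarrow> real) \<Rightarrow> bool" where
  "ergodic S \<sigma> \<longleftrightarrow>
     (\<forall>C. C \<subseteq> dpolicies S \<longrightarrow> C \<noteq> {} \<longrightarrow> C \<noteq> dpolicies S \<longrightarrow>
        (\<exists>\<pi>\<in>C. \<exists>\<pi>'\<in>dpolicies S - C. \<exists>sd\<in>S.
            (\<forall>s\<in>S - {sd}. \<pi> s = \<pi>' s) \<and>
            \<sigma> (\<Sum>s\<in>S - {sd}. \<pi> s) sd (\<pi>' sd) > 0))"

definition elog2 :: "real \<Rightarrow> ereal" where
  "elog2 x = (if x > 0 then ereal (log 2 x) else -\<infinity>)"

definition epow2 :: "ereal \<Rightarrow> real" where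
  "epow2 x = (case x of ereal r \<Rightarrow> 2 powr r | _ \<Rightarrow> 0)"

definition coherence ::
  "'m::comm_monoid_add set set \<Rightarrow> ('m \<Rightarrow> 'm set \<Rightarrow> 'm \<Rightarrow> real) \<Rightarrow> ('m set \<Rightarrow> 'm) \<Rightarrow> ereal" where
  "coherence S \<sigma> \<pi> =
     (let ss = (SOME ss. distinct ss \<and> set ss = S) in
      \<Sum>n<length ss. elog2 (\<sigma> (\<Sum>m<n. \<pi> (ss ! m)) (ss ! n) (\<pi> (ss ! n))))"

definition Xsoft ::
  "'m::comm_monoid_add set set \<Rightarrow> ('m \<Rightarrow> 'm set \<Rightarrow> 'm \<Rightarrow> real) \<Rightarrow> real \<Rightarrow> ('m set \<Rightarrow> 'm) pmf" where
  "Xsoft S \<sigma> \<beta> = embed_pmf (\<lambda>\<pi>. if \<pi> \<in> dpolicies S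
       then epow2 (ereal \<beta> * coherence S \<sigma> \<pi>) /
            (\<Sum>\<pi>'\<in>dpolicies S. epow2 (ereal \<beta> * coherence S \<sigma> \<pi>'))
       else 0)"

definition sigma_pow ::
  "('m \<Rightarrow> 'm set \<Rightarrow> 'm \<Rightarrow> real) \<Rightarrow> real \<Rightarrow> 'm \<Rightarrow> 'm set \<Rightarrow> 'm pmf" where
  "sigma_pow \<sigma> \<beta> \<phi> s = embed_pmf (\<lambda>a. if a \<in> s
       then \<sigma> \<phi> s a powr \<beta> / (\<Sum>a'\<in>s. \<sigma> \<phi> s a' powr \<beta>) else 0)"

definition gibbs_step ::
  "'m::comm_monoid_add set list \<Rightarrow> ('m \<Rightarrow> 'm set \<Rightarrow> 'm \<Rightarrow> real) \<Rightarrow> real \<Rightarrow>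
   ('m set \<Rightarrow> 'm) \<Rightarrow> ('m set \<Rightarrow> 'm) pmf" where
  "gibbs_step ss \<sigma> \<beta> \<pi> =
     bind_pmf (pmf_of_set {..<length ss}) (\<lambda>n.
       map_pmf (\<lambda>a. \<pi>(ss ! n := a))
         (sigma_pow \<sigma> \<beta> (\<Sum>s\<in>set ss - {ss ! n}. \<pi> s) (ss ! n)))"

definition gibbs_dist ::
  "'m::comm_monoid_add set list \<Rightarrow> ('m \<Rightarrow> 'm set \<Rightarrow> 'm \<Rightarrow> real) \<Rightarrow> real \<Rightarrow>
   ('m set \<Rightarrow> 'm) \<Rightarrow> nat \<Rightarrow> ('m set \<Rightarrow> 'm) pmf" where
  "gibbs_dist ss \<sigma> \<beta> \<pi>0 t =
     ((\<lambda>p. bind_pmf p (gibbs_step ss \<sigma> \<beta>)) ^^ t) (return_pmf \<pi>0)"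

definition gibbs_avg ::
  "'m::comm_monoid_add set list \<Rightarrow> ('m \<Rightarrow> 'm set \<Rightarrow> 'm \<Rightarrow> real) \<Rightarrow> real \<Rightarrow>
   ('m set \<Rightarrow> 'm) \<Rightarrow> nat \<Rightarrow> ('m set \<Rightarrow> 'm) pmf" where
  "gibbs_avg ss \<sigma> \<beta> \<pi>0 N =
     bind_pmf (pmf_of_set {0..N}) (gibbs_dist ss \<sigma> \<beta> \<pi>0)"

end

theory Submission
  imports Defs
begin

text \<open>The chain rule makes the probability of choosing the actions of a d-policy one context
at a time independent of the order of the contexts, so \<open>2 powr (\<beta> * \<chi> \<pi>)\<close> factors as
(weight of all other contexts) times \<open>\<sigma>(\<phi>, s)(\<pi> s) powr \<beta>\<close> for every context s, where
\<open>\<phi>\<close> depends only on the other contexts. This is detailed balance of the single-site update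
with respect to \<open>X\<^sup>\<beta>\<close>; ergodicity is irreducibility of the resulting finite chain. For a
finite irreducible chain every limit point of the Cesaro averages of the distributions is
stationary, and the stationary distribution is unique, which gives the convergence.\<close>

section \<open>Finite irreducible chains\<close>

lemma finite_family_convergent_subseq:
  fixes f :: "nat \<Rightarrow> 'a \<Rightarrow> real"
  assumes "finite D" and "\<And>n x. x \<in> D \<Longrightarrow> \<bar>f n x\<bar> \<le> B"
  shows "\<exists>r. strict_mono r \<and> (\<forall>x\<in>D. convergent (\<lambda>n. f (r n) x))"
  using assms
proof (induction D rule: finite_induct)
  case empty
  show ?case by (rule exI[of _ id]) (auto simp: strict_mono_def)
next
  case (insert y D)
  then obtain r where r: "strict_mono r" "\<forall>x\<in>D. convergent (\<lambda>n. f (r n) x)" by blast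
  obtain r' where r': "strict_mono r'" "monoseq (\<lambda>n. f (r (r' n)) y)"
    using seq_monosub[of "\<lambda>n. f (r n) y"] by blast
  have "Bseq (\<lambda>n. f (r (r' n)) y)"
    using insert.prems by (intro BseqI'[of _ B]) auto
  then have "convergent (\<lambda>n. f (r (r' n)) y)"
    using r'(2) Bseq_monoseq_convergent by blast
  moreover have "convergent (\<lambda>n. f (r (r' n)) x)" if "x \<in> D" for x
    using convergent_subseq_convergent[OF r(2)[rule_format, OF that] r'(1)] by (simp add: o_def)
  moreover have "strict_mono (\<lambda>n. r (r' n))"
    using r(1) r'(1) strict_mono_o unfolding o_def by blast
  ultimately show ?case by (intro exI[of _ "\<lambda>n. r (r' n)"]) auto
qed

lemma not_tendsto_imp_subseq_bounded_away:
  fixes f :: "nat \<Rightarrow> real"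
  assumes "\<not> f \<longlonglongrightarrow> L"
  shows "\<exists>e>0. \<exists>r::nat \<Rightarrow> nat. strict_mono r \<and> (\<forall>n. \<bar>f (r n) - L\<bar> \<ge> e)"
proof -
  from assms obtain e where e: "e > 0" "\<forall>N. \<exists>n\<ge>N. \<bar>f n - L\<bar> \<ge> e"
    unfolding lim_sequentially dist_real_def by (auto simp: not_less)
  then have "infinite {n. \<bar>f n - L\<bar> \<ge> e}"
    unfolding infinite_nat_iff_unbounded_le by auto
  then obtain r :: "nat \<Rightarrow> nat" where "strict_mono r" "\<forall>n. r n \<in> {n. \<bar>f n - L\<bar> \<ge> e}"
    using infinite_enumerate by blast
  then show ?thesis using e(1) by auto
qed

lemma stationary_if_detailed_balance:
  fixes K :: "'a \<Rightarrow> 'a \<Rightarrow> real"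
  assumes "\<And>x. x \<in> D \<Longrightarrow> (\<Sum>y\<in>D. K x y) = 1"
    and "\<And>x y. x \<in> D \<Longrightarrow> y \<in> D \<Longrightarrow> X x * K x y = X y * K y x"
    and "y \<in> D"
  shows "(\<Sum>x\<in>D. X x * K x y) = X y"
proof -
  have "(\<Sum>x\<in>D. X x * K x y) = (\<Sum>x\<in>D. X y * K y x)"
    using assms(2,3) by (intro sum.cong) auto
  also have "\<dots> = X y" using assms(1,3) by (simp add: sum_distrib_left[symmetric])
  finally show ?thesis .
qed

text \<open>The kernel \<^term>\<open>K\<close> need not be stochastic: uniqueness and the Cesaro limit only use
nonnegativity and irreducibility.\<close>

locale stationary_irreducible_kernel =
  fixes D :: "'a set" and K :: "'a \<Rightarrow> 'a \<Rightarrow> real" and X :: "'a \<Rightarrow> real"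
  assumes finite_space: "finite D"
    and kernel_nonneg: "\<And>x y. K x y \<ge> 0"
    and stationary_nonneg: "\<And>x. X x \<ge> 0"
    and stationary_sum: "(\<Sum>x\<in>D. X x) = 1"
    and stationary: "\<And>y. y \<in> D \<Longrightarrow> (\<Sum>x\<in>D. X x * K x y) = X y"
    and irreducible: "\<And>C. C \<subseteq> D \<Longrightarrow> C \<noteq> {} \<Longrightarrow> C \<noteq> D \<Longrightarrow> \<exists>x\<in>C. \<exists>y\<in>D - C. K x y > 0"
begin

lemma stationary_pos:
  assumes "x \<in> D"
  shows "X x > 0"
proof (rule ccontr)
  assume "\<not> X x > 0"
  define C where "C = {x\<in>D. X x > 0}"
  have "C \<noteq> {}"
  proof
    assume "C = {}"
    then have "\<forall>x\<in>D. X x = 0" using stationary_nonneg unfolding C_def by (auto simp: order.order_iff_strict)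
    then show False using stationary_sum by simp
  qed
  moreover have "C \<noteq> D" using assms \<open>\<not> X x > 0\<close> unfolding C_def by auto
  ultimately obtain u v where uv: "u \<in> C" "v \<in> D - C" "K u v > 0"
    using irreducible[of C] unfolding C_def by auto
  have "0 < X u * K u v" using uv unfolding C_def by simp
  also have "\<dots> \<le> (\<Sum>x\<in>D. X x * K x v)"
    using uv finite_space by (intro member_le_sum) (auto simp: C_def stationary_nonneg kernel_nonneg)
  also have "\<dots> = X v" using uv stationary by auto
  finally show False using uv unfolding C_def by auto
qed

text \<open>The set where \<open>\<nu> / X\<close> attains its maximum receives no edge from outside, so by
irreducibility it is everything.\<close>

lemma stationary_unique:
  assumes nonneg: "\<And>x. x \<in> D \<Longrightarrow> \<nu> x \<ge> 0" and sum_one: "(\<Sum>x\<in>D. \<nu> x) = 1"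
    and stat: "\<And>y. y \<in> D \<Longrightarrow> (\<Sum>x\<in>D. \<nu> x * K x y) = \<nu> y"
    and "y \<in> D"
  shows "\<nu> y = X y"
proof -
  have "D \<noteq> {}" using stationary_sum by auto
  define c where "c = Max ((\<lambda>x. \<nu> x / X x) ` D)"
  have le_c: "\<nu> x \<le> c * X x" if "x \<in> D" for x
  proof -
    have "\<nu> x / X x \<le> c" unfolding c_def using finite_space that by (intro Max_ge) auto
    then show ?thesis using stationary_pos[OF that] by (simp add: divide_le_eq)
  qed
  define C where "C = {x\<in>D. \<nu> x = c * X x}"
  have "c \<in> (\<lambda>x. \<nu> x / X x) ` D"
    unfolding c_def using finite_space \<open>D \<noteq> {}\<close> by (intro Max_in) auto
  then obtain x0 where "x0 \<in> D" "c = \<nu> x0 / X x0" by auto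
  then have "x0 \<in> C" unfolding C_def using stationary_pos[of x0] by simp
  have "C = D"
  proof (rule ccontr)
    assume "C \<noteq> D"
    then have "D - C \<subseteq> D" "D - C \<noteq> {}" "D - C \<noteq> D" using \<open>x0 \<in> C\<close> \<open>x0 \<in> D\<close> C_def by auto
    then obtain u v where uv: "u \<in> D - C" "v \<in> C" "v \<in> D" "K u v > 0"
      using irreducible[of "D - C"] by auto
    have "\<nu> u * K u v < c * X u * K u v" using uv le_c[of u] unfolding C_def by auto
    then have "(\<Sum>x\<in>D. \<nu> x * K x v) < (\<Sum>x\<in>D. c * X x * K x v)"
      using finite_space uv(1) le_c kernel_nonneg
      by (intro sum_strict_mono_ex1) (auto intro: mult_right_mono)
    also have "\<dots> = c * X v" using stationary[OF \<open>v \<in> D\<close>]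
      by (simp add: sum_distrib_left[symmetric] mult.assoc)
    also have "\<dots> = \<nu> v" using \<open>v \<in> C\<close> unfolding C_def by auto
    finally show False using stat[OF \<open>v \<in> D\<close>] by simp
  qed
  then have eq: "\<And>x. x \<in> D \<Longrightarrow> \<nu> x = c * X x" unfolding C_def by auto
  have "1 = (\<Sum>x\<in>D. c * X x)" using sum_one eq by (metis (mono_tags, lifting) sum.cong)
  also have "\<dots> = c" using stationary_sum by (simp add: sum_distrib_left[symmetric])
  finally show ?thesis using eq \<open>y \<in> D\<close> by simp
qed

lemma tendsto_stationary_if_asymptotically_stationary:
  fixes \<mu> :: "nat \<Rightarrow> 'a \<Rightarrow> real"
  assumes nonneg: "\<And>n x. x \<in> D \<Longrightarrow> \<mu> n x \<ge> 0" and sum_one: "\<And>n. (\<Sum>x\<in>D. \<mu> n x) = 1"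
    and defect: "\<And>y. y \<in> D \<Longrightarrow> (\<lambda>n. (\<Sum>x\<in>D. \<mu> n x * K x y) - \<mu> n y) \<longlonglongrightarrow> 0"
    and "y \<in> D"
  shows "(\<lambda>n. \<mu> n y) \<longlonglongrightarrow> X y"
proof (rule ccontr)
  assume "\<not> (\<lambda>n. \<mu> n y) \<longlonglongrightarrow> X y"
  then obtain e and r0 :: "nat \<Rightarrow> nat" where e: "e > 0" "strict_mono r0" "\<And>n. \<bar>\<mu> (r0 n) y - X y\<bar> \<ge> e"
    using not_tendsto_imp_subseq_bounded_away by blast
  have "\<bar>\<mu> n x\<bar> \<le> 1" if "x \<in> D" for n x
    using member_le_sum[of x D "\<mu> n"] that finite_space nonneg sum_one by auto
  then obtain r where r: "strict_mono r" "\<forall>x\<in>D. convergent (\<lambda>k. \<mu> (r0 (r k)) x)"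
    using finite_family_convergent_subseq[OF finite_space, where f = "\<lambda>k. \<mu> (r0 k)" and B = 1]
    by blast
  define q where "q = r0 \<circ> r"
  have q: "strict_mono q" unfolding q_def using r(1) e(2) strict_mono_o by blast
  define \<nu> where "\<nu> x = lim (\<lambda>k. \<mu> (q k) x)" for x
  have conv: "(\<lambda>k. \<mu> (q k) x) \<longlonglongrightarrow> \<nu> x" if "x \<in> D" for x
    using r(2) that unfolding \<nu>_def q_def by (simp add: convergent_LIMSEQ_iff)
  have "\<nu> y = X y"
  proof (rule stationary_unique[where \<nu> = \<nu>])
    show "\<nu> x \<ge> 0" if "x \<in> D" for x
      using conv[OF that] nonneg that by (intro LIMSEQ_le_const) auto
    have "(\<lambda>k. \<Sum>x\<in>D. \<mu> (q k) x) \<longlonglongrightarrow> (\<Sum>x\<in>D. \<nu> x)"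
      using conv by (intro tendsto_sum) auto
    then show "(\<Sum>x\<in>D. \<nu> x) = 1" by (simp add: sum_one LIMSEQ_const_iff)
    show "(\<Sum>x\<in>D. \<nu> x * K x z) = \<nu> z" if "z \<in> D" for z
    proof -
      have "(\<lambda>k. (\<Sum>x\<in>D. \<mu> (q k) x * K x z) - \<mu> (q k) z) \<longlonglongrightarrow> (\<Sum>x\<in>D. \<nu> x * K x z) - \<nu> z"
        using conv that by (intro tendsto_diff tendsto_sum tendsto_mult_right) auto
      moreover have "(\<lambda>k. (\<Sum>x\<in>D. \<mu> (q k) x * K x z) - \<mu> (q k) z) \<longlonglongrightarrow> 0"
        using LIMSEQ_subseq_LIMSEQ[OF defect[OF that] q] by (simp add: o_def)
      ultimately have "(\<Sum>x\<in>D. \<nu> x * K x z) - \<nu> z = 0" by (rule LIMSEQ_unique)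
      then show ?thesis by simp
    qed
    show "y \<in> D" by fact
  qed
  then have "(\<lambda>k. \<bar>\<mu> (q k) y - X y\<bar>) \<longlonglongrightarrow> \<bar>X y - X y\<bar>"
    using conv[OF \<open>y \<in> D\<close>] by (intro tendsto_rabs tendsto_diff) auto
  then have "e \<le> 0" using e(3) unfolding q_def by (intro LIMSEQ_le_const) auto
  then show False using e(1) by simp
qed

lemma cesaro_tendsto_stationary:
  fixes \<mu> :: "nat \<Rightarrow> 'a \<Rightarrow> real"
  assumes nonneg: "\<And>t x. x \<in> D \<Longrightarrow> \<mu> t x \<ge> 0" and sum_one: "\<And>t. (\<Sum>x\<in>D. \<mu> t x) = 1"
    and evolution: "\<And>t y. y \<in> D \<Longrightarrow> \<mu> (Suc t) y = (\<Sum>x\<in>D. \<mu> t x * K x y)"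
    and "y \<in> D"
  shows "(\<lambda>N. (\<Sum>t\<le>N. \<mu> t y) / (real N + 1)) \<longlonglongrightarrow> X y"
proof (rule tendsto_stationary_if_asymptotically_stationary)
  show "(\<Sum>t\<le>N. \<mu> t x) / (real N + 1) \<ge> 0" if "x \<in> D" for N x
    using nonneg that by (intro divide_nonneg_nonneg sum_nonneg) auto
  show "(\<Sum>x\<in>D. (\<Sum>t\<le>N. \<mu> t x) / (real N + 1)) = 1" for N
  proof -
    have "(\<Sum>x\<in>D. \<Sum>t\<le>N. \<mu> t x) = (\<Sum>t\<le>N. \<Sum>x\<in>D. \<mu> t x)" by (rule sum.swap)
    then show ?thesis using sum_one by (simp add: sum_divide_distrib[symmetric])
  qed
  show "(\<lambda>N. (\<Sum>x\<in>D. (\<Sum>t\<le>N. \<mu> t x) / (real N + 1) * K x z) - (\<Sum>t\<le>N. \<mu> t z) / (real N + 1))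
          \<longlonglongrightarrow> 0" if "z \<in> D" for z
  proof -
    have telescope: "(\<Sum>x\<in>D. (\<Sum>t\<le>N. \<mu> t x) / (real N + 1) * K x z) - (\<Sum>t\<le>N. \<mu> t z) / (real N + 1)
        = (\<mu> (Suc N) z - \<mu> 0 z) / (real N + 1)" for N
    proof -
      have "(\<Sum>x\<in>D. (\<Sum>t\<le>N. \<mu> t x) * K x z) = (\<Sum>x\<in>D. \<Sum>t\<le>N. \<mu> t x * K x z)"
        by (simp add: sum_distrib_right)
      also have "\<dots> = (\<Sum>t\<le>N. \<Sum>x\<in>D. \<mu> t x * K x z)" by (rule sum.swap)
      also have "\<dots> = (\<Sum>t\<le>N. \<mu> (Suc t) z)" using evolution[OF that] by simp
      also have "\<dots> = (\<Sum>t\<le>N. \<mu> t z) + \<mu> (Suc N) z - \<mu> 0 z"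
        using sum.atMost_Suc_shift[of "\<lambda>t. \<mu> t z" N] sum.atMost_Suc[of "\<lambda>t. \<mu> t z" N] by simp
      finally have telescope_sum: "(\<Sum>x\<in>D. (\<Sum>t\<le>N. \<mu> t x) * K x z)
          = (\<Sum>t\<le>N. \<mu> t z) + \<mu> (Suc N) z - \<mu> 0 z" .
      have "(\<Sum>x\<in>D. (\<Sum>t\<le>N. \<mu> t x) / (real N + 1) * K x z)
          = (\<Sum>x\<in>D. (\<Sum>t\<le>N. \<mu> t x) * K x z / (real N + 1))" by simp
      also have "\<dots> = ((\<Sum>t\<le>N. \<mu> t z) + \<mu> (Suc N) z - \<mu> 0 z) / (real N + 1)"
        unfolding telescope_sum[symmetric] by (rule sum_divide_distrib[symmetric])
      finally have "(\<Sum>x\<in>D. (\<Sum>t\<le>N. \<mu> t x) / (real N + 1) * K x z)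
          = ((\<Sum>t\<le>N. \<mu> t z) + \<mu> (Suc N) z - \<mu> 0 z) / (real N + 1)" .
      then show ?thesis by (simp add: diff_divide_distrib[symmetric])
    qed
    have bounded: "\<bar>\<mu> t z\<bar> \<le> 1" for t
      using member_le_sum[of z D "\<mu> t"] that finite_space nonneg sum_one by auto
    have "(\<lambda>N. (\<mu> (Suc N) z - \<mu> 0 z) / (real N + 1)) \<longlonglongrightarrow> 0"
    proof (rule Lim_null_comparison)
      show "\<forall>\<^sub>F N in sequentially. norm ((\<mu> (Suc N) z - \<mu> 0 z) / (real N + 1)) \<le> 2 / (real N + 1)"
      proof (intro always_eventually allI)
        fix N
        have "\<bar>\<mu> (Suc N) z - \<mu> 0 z\<bar> \<le> 2"
          using bounded[of "Suc N"] bounded[of 0] by (simp add: abs_le_iff)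
        then show "norm ((\<mu> (Suc N) z - \<mu> 0 z) / (real N + 1)) \<le> 2 / (real N + 1)"
          by (simp add: abs_divide divide_right_mono)
      qed
      show "(\<lambda>N. 2 / (real N + 1)) \<longlonglongrightarrow> 0"
        using tendsto_mult_right_zero[OF LIMSEQ_inverse_real_of_nat, of 2]
        by (simp add: divide_inverse add.commute)
    qed
    then show ?thesis by (simp only: telescope)
  qed
qed (fact \<open>y \<in> D\<close>)

end

lemma pmf_embed_normalized:
  fixes f :: "'a \<Rightarrow> real"
  assumes "finite A" and "\<And>x. x \<in> A \<Longrightarrow> f x \<ge> 0" and "(\<Sum>x\<in>A. f x) > 0"
  shows "pmf (embed_pmf (\<lambda>x. if x \<in> A then f x / (\<Sum>y\<in>A. f y) else 0)) x
           = (if x \<in> A then f x / (\<Sum>y\<in>A. f y) else 0)"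
proof (rule pmf_embed_pmf)
  let ?g = "\<lambda>x. if x \<in> A then f x / (\<Sum>y\<in>A. f y) else 0"
  show nonneg: "?g x \<ge> 0" for x using assms(2,3) by simp
  have "(\<integral>\<^sup>+x. ennreal (?g x) \<partial>count_space UNIV) = (\<Sum>x\<in>A. ennreal (?g x))"
    by (rule nn_integral_count_space') (use assms in auto)
  also have "\<dots> = (\<Sum>x\<in>A. ennreal (f x / (\<Sum>y\<in>A. f y)))" by (intro sum.cong) auto
  also have "\<dots> = ennreal (\<Sum>x\<in>A. f x / (\<Sum>y\<in>A. f y))"
    using assms(2,3) by (intro sum_ennreal) auto
  also have "\<dots> = 1" using assms(3) by (simp add: sum_divide_distrib[symmetric])
  finally show "(\<integral>\<^sup>+x. ennreal (?g x) \<partial>count_space UNIV) = 1" .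
qed

lemma pmf_bind_finite_support:
  assumes "finite D" and "set_pmf M \<subseteq> D"
  shows "pmf (bind_pmf M f) y = (\<Sum>x\<in>D. pmf M x * pmf (f x) y)"
proof -
  have "pmf (bind_pmf M f) y = (\<integral>x. pmf (f x) y \<partial>measure_pmf M)" by (rule pmf_bind)
  also have "\<dots> = (\<Sum>x\<in>D. pmf M x *\<^sub>R pmf (f x) y)"
    using assms by (intro integral_measure_pmf) auto
  finally show ?thesis by simp
qed

lemma pmf_map_fun_upd:
  "pmf (map_pmf (\<lambda>a. \<pi>(c := a)) M) \<pi>' = (if \<forall>s. s \<noteq> c \<longrightarrow> \<pi> s = \<pi>' s then pmf M (\<pi>' c) else 0)"
proof (cases "\<forall>s. s \<noteq> c \<longrightarrow> \<pi> s = \<pi>' s")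
  case True
  then have "\<pi>' = \<pi>(c := \<pi>' c)" by auto
  moreover have "inj (\<lambda>a. \<pi>(c := a))" by (rule injI) (metis fun_upd_same)
  ultimately show ?thesis using True pmf_map_inj'[of "\<lambda>a. \<pi>(c := a)" M "\<pi>' c"] by simp
next
  case False
  then have "\<pi>' \<notin> (\<lambda>a. \<pi>(c := a)) ` set_pmf M" by auto
  then have "pmf (map_pmf (\<lambda>a. \<pi>(c := a)) M) \<pi>' = 0" by (rule pmf_map_outside)
  then show ?thesis by (simp only: if_not_P[OF False])
qed

lemma pmf_eq_1_if_subsingleton:
  assumes "\<And>y. y = x"
  shows "pmf p x = 1"
proof -
  have "set_pmf p \<subseteq> {x}" using assms by auto
  then show ?thesis using sum_pmf_eq_1[of "{x}" p] by simp
qed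

section \<open>Coherence as a product of choice probabilities\<close>

text \<open>For an enumeration \<open>ss\<close> of the contexts, \<open>2 powr \<chi>(\<pi>)\<close> is \<open>path_prob \<sigma> \<pi> 0 ss\<close>.\<close>

fun path_prob ::
  "('m::comm_monoid_add \<Rightarrow> 'm set \<Rightarrow> 'm \<Rightarrow> real) \<Rightarrow> ('m set \<Rightarrow> 'm) \<Rightarrow> 'm \<Rightarrow> 'm set list \<Rightarrow> real" where
  "path_prob \<sigma> \<pi> \<phi> [] = 1"
| "path_prob \<sigma> \<pi> \<phi> (s # l) = \<sigma> \<phi> s (\<pi> s) * path_prob \<sigma> \<pi> (\<phi> + \<pi> s) l"

definition chain_rule :: "'m::comm_monoid_add set set \<Rightarrow> ('m \<Rightarrow> 'm set \<Rightarrow> 'm \<Rightarrow> real) \<Rightarrow> bool" where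
  "chain_rule S \<sigma> \<longleftrightarrow> (\<forall>\<phi> s1 s2 a1 a2. s1 \<in> S \<longrightarrow> s2 \<in> S \<longrightarrow> a1 \<in> s1 \<longrightarrow> a2 \<in> s2 \<longrightarrow>
        \<sigma> \<phi> s1 a1 * \<sigma> (\<phi> + a1) s2 a2 = \<sigma> \<phi> s2 a2 * \<sigma> (\<phi> + a2) s1 a1)"

lemma path_prob_cong:
  "(\<And>s. s \<in> set l \<Longrightarrow> \<pi> s = \<pi>' s) \<Longrightarrow> path_prob \<sigma> \<pi> \<phi> l = path_prob \<sigma> \<pi>' \<phi> l"
  by (induction l arbitrary: \<phi>) auto

lemma path_prob_eq_prod:
  "path_prob \<sigma> \<pi> \<phi> l = (\<Prod>n<length l. \<sigma> (\<phi> + (\<Sum>m<n. \<pi> (l ! m))) (l ! n) (\<pi> (l ! n)))"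
proof (induction l arbitrary: \<phi>)
  case Nil
  then show ?case by simp
next
  case (Cons s l)
  have "(\<Prod>n<length (s # l). \<sigma> (\<phi> + (\<Sum>m<n. \<pi> ((s # l) ! m))) ((s # l) ! n) (\<pi> ((s # l) ! n)))
     = \<sigma> \<phi> s (\<pi> s) * (\<Prod>n<length l. \<sigma> (\<phi> + (\<Sum>m<Suc n. \<pi> ((s # l) ! m))) (l ! n) (\<pi> (l ! n)))"
    by (simp only: length_Cons prod.lessThan_Suc_shift) (simp del: sum.lessThan_Suc)
  also have "(\<Prod>n<length l. \<sigma> (\<phi> + (\<Sum>m<Suc n. \<pi> ((s # l) ! m))) (l ! n) (\<pi> (l ! n)))
      = (\<Prod>n<length l. \<sigma> (\<phi> + \<pi> s + (\<Sum>m<n. \<pi> (l ! m))) (l ! n) (\<pi> (l ! n)))"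
    by (simp add: sum.lessThan_Suc_shift add.assoc del: sum.lessThan_Suc)
  finally show ?case using Cons[of "\<phi> + \<pi> s"] by simp
qed

lemma path_prob_nonneg:
  "(\<And>\<phi> s a. s \<in> set l \<Longrightarrow> \<sigma> \<phi> s a \<ge> 0) \<Longrightarrow> path_prob \<sigma> \<pi> \<phi> l \<ge> 0"
  by (induction l arbitrary: \<phi>) auto

lemma path_prob_snoc:
  "distinct (l @ [s]) \<Longrightarrow>
   path_prob \<sigma> \<pi> \<phi> (l @ [s]) = path_prob \<sigma> \<pi> \<phi> l * \<sigma> (\<phi> + (\<Sum>t\<in>set l. \<pi> t)) s (\<pi> s)"
  by (induction l arbitrary: \<phi>) (simp_all add: add.assoc mult.assoc)

lemma path_prob_remove1:
  assumes "chain_rule S \<sigma>" and "\<And>s. s \<in> S \<Longrightarrow> \<pi> s \<in> s"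
  shows "distinct l \<Longrightarrow> set l \<subseteq> S \<Longrightarrow> s \<in> set l \<Longrightarrow>
    path_prob \<sigma> \<pi> \<phi> l = \<sigma> \<phi> s (\<pi> s) * path_prob \<sigma> \<pi> (\<phi> + \<pi> s) (remove1 s l)"
proof (induction l arbitrary: \<phi>)
  case Nil
  then show ?case by simp
next
  case (Cons t l)
  show ?case
  proof (cases "t = s")
    case True
    then show ?thesis by simp
  next
    case False
    then have "s \<in> set l" "s \<in> S" "t \<in> S" using Cons.prems by auto
    have swap: "\<sigma> \<phi> t (\<pi> t) * \<sigma> (\<phi> + \<pi> t) s (\<pi> s) = \<sigma> \<phi> s (\<pi> s) * \<sigma> (\<phi> + \<pi> s) t (\<pi> t)"
      using assms \<open>s \<in> S\<close> \<open>t \<in> S\<close> unfolding chain_rule_def by blast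
    have "path_prob \<sigma> \<pi> \<phi> (t # l)
        = (\<sigma> \<phi> t (\<pi> t) * \<sigma> (\<phi> + \<pi> t) s (\<pi> s)) * path_prob \<sigma> \<pi> (\<phi> + \<pi> t + \<pi> s) (remove1 s l)"
      using Cons.IH[of "\<phi> + \<pi> t"] Cons.prems \<open>s \<in> set l\<close> by (simp add: mult.assoc)
    also have "\<dots> = \<sigma> \<phi> s (\<pi> s) * (\<sigma> (\<phi> + \<pi> s) t (\<pi> t) * path_prob \<sigma> \<pi> (\<phi> + \<pi> s + \<pi> t) (remove1 s l))"
      unfolding swap by (simp add: add_ac mult.assoc)
    also have "\<dots> = \<sigma> \<phi> s (\<pi> s) * path_prob \<sigma> \<pi> (\<phi> + \<pi> s) (remove1 s (t # l))"
      using False by simp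
    finally show ?thesis .
  qed
qed

lemma path_prob_perm:
  assumes "chain_rule S \<sigma>" and "\<And>s. s \<in> S \<Longrightarrow> \<pi> s \<in> s"
  shows "distinct l \<Longrightarrow> distinct l' \<Longrightarrow> set l = set l' \<Longrightarrow> set l \<subseteq> S \<Longrightarrow>
    path_prob \<sigma> \<pi> \<phi> l = path_prob \<sigma> \<pi> \<phi> l'"
proof (induction l arbitrary: \<phi> l')
  case Nil
  then show ?case by simp
next
  case (Cons s l)
  have "path_prob \<sigma> \<pi> \<phi> l' = \<sigma> \<phi> s (\<pi> s) * path_prob \<sigma> \<pi> (\<phi> + \<pi> s) (remove1 s l')"
    using path_prob_remove1[OF assms, of l' s \<phi>] Cons.prems by auto
  moreover have "path_prob \<sigma> \<pi> (\<phi> + \<pi> s) l = path_prob \<sigma> \<pi> (\<phi> + \<pi> s) (remove1 s l')"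
    using Cons.prems by (intro Cons.IH) auto
  ultimately show ?case by simp
qed

lemma path_prob_remove1_last:
  assumes "chain_rule S \<sigma>" and "\<And>s. s \<in> S \<Longrightarrow> \<pi> s \<in> s"
    and "distinct l" "set l \<subseteq> S" "s \<in> set l"
  shows "path_prob \<sigma> \<pi> \<phi> l
           = path_prob \<sigma> \<pi> \<phi> (remove1 s l) * \<sigma> (\<phi> + (\<Sum>t\<in>set l - {s}. \<pi> t)) s (\<pi> s)"
proof -
  have "path_prob \<sigma> \<pi> \<phi> l = path_prob \<sigma> \<pi> \<phi> (remove1 s l @ [s])"
    using assms by (intro path_prob_perm[OF assms(1,2)]) auto
  also have "\<dots> = path_prob \<sigma> \<pi> \<phi> (remove1 s l) * \<sigma> (\<phi> + (\<Sum>t\<in>set (remove1 s l). \<pi> t)) s (\<pi> s)"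
    using assms(3) by (intro path_prob_snoc) auto
  finally show ?thesis using assms(3) by simp
qed

lemma sum_elog2:
  fixes t :: "nat \<Rightarrow> real"
  shows "(\<And>n. n < k \<Longrightarrow> t n \<ge> 0) \<Longrightarrow>
    (\<Sum>n<k. elog2 (t n)) = (if \<forall>n<k. t n > 0 then ereal (log 2 (\<Prod>n<k. t n)) else -\<infinity>)"
proof (induction k)
  case 0
  then show ?case by simp
next
  case (Suc k)
  then have IH: "(\<Sum>n<k. elog2 (t n)) = (if \<forall>n<k. t n > 0 then ereal (log 2 (\<Prod>n<k. t n)) else -\<infinity>)"
    by simp
  show ?case
  proof (cases "\<forall>n<Suc k. t n > 0")
    case True
    then have "(\<Prod>n<k. t n) > 0" "t k > 0" by (auto intro: prod_pos)
    then show ?thesis using IH True by (simp add: elog2_def log_mult_pos)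
  next
    case False
    then show ?thesis using IH by (auto simp: elog2_def less_Suc_eq)
  qed
qed

lemma epow2_times_sum_elog2:
  fixes t :: "nat \<Rightarrow> real"
  assumes "\<beta> > 0" and "\<And>n. n < k \<Longrightarrow> t n \<ge> 0"
  shows "epow2 (ereal \<beta> * (\<Sum>n<k. elog2 (t n))) = (\<Prod>n<k. t n) powr \<beta>"
proof (cases "\<forall>n<k. t n > 0")
  case True
  then have "(\<Prod>n<k. t n) > 0" by (intro prod_pos) auto
  have "epow2 (ereal \<beta> * (\<Sum>n<k. elog2 (t n))) = 2 powr (log 2 (\<Prod>n<k. t n) * \<beta>)"
    using sum_elog2[of k t] assms True by (simp add: epow2_def mult.commute)
  also have "\<dots> = (\<Prod>n<k. t n) powr \<beta>"
    using \<open>(\<Prod>n<k. t n) > 0\<close> by (simp add: powr_powr[symmetric])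
  finally show ?thesis .
next
  case False
  then obtain n where "n < k" "t n = 0" using assms(2) by force
  then have "(\<Prod>n<k. t n) = 0" by (intro prod_zero) auto
  then show ?thesis using sum_elog2[of k t] assms False by (simp add: epow2_def)
qed

section \<open>The Gibbs sampler\<close>

lemma gibbs_dist_Suc:
  "gibbs_dist ss \<sigma> \<beta> \<pi>0 (Suc t) = bind_pmf (gibbs_dist ss \<sigma> \<beta> \<pi>0 t) (gibbs_step ss \<sigma> \<beta>)"
  unfolding gibbs_dist_def by simp

lemma dpolicies_eq_outside:
  assumes "\<pi> \<in> dpolicies S" "\<pi>' \<in> dpolicies S" "\<forall>s\<in>S - {c}. \<pi> s = \<pi>' s"
  shows "\<forall>s. s \<noteq> c \<longrightarrow> \<pi> s = \<pi>' s"
proof (intro allI impI)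
  fix s assume "s \<noteq> c"
  show "\<pi> s = \<pi>' s"
  proof (cases "s \<in> S")
    case True
    with \<open>s \<noteq> c\<close> assms(3) show ?thesis by blast
  next
    case False
    then show ?thesis
      using PiE_arb[OF assms(1)[unfolded dpolicies_def] False] PiE_arb[OF assms(2)[unfolded dpolicies_def] False]
      by simp
  qed
qed

lemma pmf_gibbs_avg:
  "pmf (gibbs_avg ss \<sigma> \<beta> \<pi>0 N) \<pi> = (\<Sum>t\<le>N. pmf (gibbs_dist ss \<sigma> \<beta> \<pi>0 t) \<pi>) / (real N + 1)"
  unfolding gibbs_avg_def by (subst pmf_bind_pmf_of_set) (auto simp: atLeast0AtMost)

locale gibbs_sampler =
  fixes A :: "'m::comm_monoid_add set" and S :: "'m set set" and \<sigma> :: "'m \<Rightarrow> 'm set \<Rightarrow> 'm \<Rightarrow> real"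
    and ss :: "'m set list" and \<beta> :: real
  assumes learning_system: "learning_system A S \<sigma>"
    and distinct_ss: "distinct ss" and set_ss: "set ss = S"
    and beta_pos: "\<beta> > 0" and contexts_nonempty: "S \<noteq> {}"
begin

lemma finite_action_set: "finite A" and union_contexts: "\<Union>S = A"
  and sigma_nonneg: "s \<in> S \<Longrightarrow> \<sigma> \<phi> s a \<ge> 0"
  and sigma_sum_one: "s \<in> S \<Longrightarrow> (\<Sum>a\<in>s. \<sigma> \<phi> s a) = 1"
  and chain_rule_sigma: "chain_rule S \<sigma>"
  using learning_system unfolding learning_system_def chain_rule_def by simp_all

lemma finite_contexts: "finite S"
  using finite_action_set union_contexts by (metis finite_UnionD)

lemma finite_context: "s \<in> S \<Longrightarrow> finite s"
  using finite_action_set union_contexts by (metis Union_upper finite_subset)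

lemma dpolicy_in_context: "\<pi> \<in> dpolicies S \<Longrightarrow> s \<in> S \<Longrightarrow> \<pi> s \<in> s"
  unfolding dpolicies_def by auto

lemma finite_dpolicies: "finite (dpolicies S)"
  unfolding dpolicies_def using finite_contexts finite_context by (intro finite_PiE) auto

lemma ex_sigma_pos:
  assumes "s \<in> S"
  shows "\<exists>a\<in>s. \<sigma> \<phi> s a > 0"
proof (rule ccontr)
  assume "\<not> (\<exists>a\<in>s. \<sigma> \<phi> s a > 0)"
  then have "\<forall>a\<in>s. \<sigma> \<phi> s a = 0" using sigma_nonneg[OF assms] by (simp add: not_less order.antisym)
  then show False using sigma_sum_one[OF assms, of \<phi>] by simp
qed

lemma pmf_sigma_pow:
  assumes "s \<in> S"
  shows "pmf (sigma_pow \<sigma> \<beta> \<phi> s) a =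
           (if a \<in> s then \<sigma> \<phi> s a powr \<beta> / (\<Sum>a'\<in>s. \<sigma> \<phi> s a' powr \<beta>) else 0)"
proof -
  obtain a where "a \<in> s" "\<sigma> \<phi> s a > 0" using ex_sigma_pos[OF assms] by blast
  then have "(\<Sum>a'\<in>s. \<sigma> \<phi> s a' powr \<beta>) > 0"
    using finite_context[OF assms] by (intro sum_pos2) auto
  then show ?thesis
    unfolding sigma_pow_def using finite_context[OF assms] by (intro pmf_embed_normalized) auto
qed

lemma set_pmf_sigma_pow: "s \<in> S \<Longrightarrow> set_pmf (sigma_pow \<sigma> \<beta> \<phi> s) \<subseteq> s"
  by (auto simp: set_pmf_iff pmf_sigma_pow split: if_splits)

definition weight :: "('m set \<Rightarrow> 'm) \<Rightarrow> real" where
  "weight \<pi> = path_prob \<sigma> \<pi> 0 ss powr \<beta>"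

lemma epow2_coherence:
  assumes "\<pi> \<in> dpolicies S"
  shows "epow2 (ereal \<beta> * coherence S \<sigma> \<pi>) = weight \<pi>"
proof -
  define ss0 where "ss0 = (SOME ss. distinct ss \<and> set ss = S)"
  have "distinct ss0 \<and> set ss0 = S"
    unfolding ss0_def using finite_distinct_list[OF finite_contexts] by (metis (mono_tags, lifting) someI_ex)
  then have ss0: "distinct ss0" "set ss0 = S" by auto
  have "epow2 (ereal \<beta> * coherence S \<sigma> \<pi>)
      = (\<Prod>n<length ss0. \<sigma> (\<Sum>m<n. \<pi> (ss0 ! m)) (ss0 ! n) (\<pi> (ss0 ! n))) powr \<beta>"
    unfolding coherence_def Let_def ss0_def[symmetric]
    using ss0 by (intro epow2_times_sum_elog2 beta_pos sigma_nonneg) auto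
  also have "\<dots> = path_prob \<sigma> \<pi> 0 ss0 powr \<beta>" by (simp add: path_prob_eq_prod)
  also have "path_prob \<sigma> \<pi> 0 ss0 = path_prob \<sigma> \<pi> 0 ss"
    using ss0 distinct_ss set_ss assms dpolicy_in_context
    by (intro path_prob_perm[OF chain_rule_sigma]) auto
  finally show ?thesis unfolding weight_def .
qed

lemma ex_path_prob_pos:
  "distinct l \<Longrightarrow> set l \<subseteq> S \<Longrightarrow> \<exists>\<pi>. (\<forall>s\<in>set l. \<pi> s \<in> s) \<and> path_prob \<sigma> \<pi> \<phi> l > 0"
proof (induction l arbitrary: \<phi>)
  case Nil
  then show ?case by simp
next
  case (Cons s l)
  obtain a where a: "a \<in> s" "\<sigma> \<phi> s a > 0" using ex_sigma_pos[of s \<phi>] Cons.prems by auto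
  obtain \<pi> where \<pi>: "\<forall>t\<in>set l. \<pi> t \<in> t" "path_prob \<sigma> \<pi> (\<phi> + a) l > 0"
    using Cons.IH[of "\<phi> + a"] Cons.prems by auto
  have "path_prob \<sigma> (\<pi>(s := a)) (\<phi> + a) l = path_prob \<sigma> \<pi> (\<phi> + a) l"
    using Cons.prems by (intro path_prob_cong) auto
  then have "path_prob \<sigma> (\<pi>(s := a)) \<phi> (s # l) = \<sigma> \<phi> s a * path_prob \<sigma> \<pi> (\<phi> + a) l"
    by simp
  then have "path_prob \<sigma> (\<pi>(s := a)) \<phi> (s # l) > 0" using a(2) \<pi>(2) by simp
  moreover have "\<forall>t\<in>set (s # l). (\<pi>(s := a)) t \<in> t" using a(1) \<pi>(1) by auto
  ultimately show ?case by blast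
qed

lemma sum_weight_pos: "(\<Sum>\<pi>\<in>dpolicies S. weight \<pi>) > 0"
proof -
  obtain \<pi> where \<pi>: "\<forall>s\<in>S. \<pi> s \<in> s" "path_prob \<sigma> \<pi> 0 ss > 0"
    using ex_path_prob_pos[of ss 0] distinct_ss set_ss by auto
  have "restrict \<pi> S \<in> dpolicies S" unfolding dpolicies_def using \<pi>(1) by auto
  moreover have "weight (restrict \<pi> S) > 0"
    unfolding weight_def using \<pi>(2) set_ss path_prob_cong[of ss "restrict \<pi> S" \<pi>] by simp
  ultimately show ?thesis
    using finite_dpolicies by (intro sum_pos2[of _ "restrict \<pi> S"]) (auto simp: weight_def)
qed

lemma pmf_Xsoft:
  "pmf (Xsoft S \<sigma> \<beta>) \<pi> = (if \<pi> \<in> dpolicies S then weight \<pi> / (\<Sum>\<pi>'\<in>dpolicies S. weight \<pi>') else 0)"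
proof -
  have "Xsoft S \<sigma> \<beta> = embed_pmf (\<lambda>\<pi>. if \<pi> \<in> dpolicies S
          then weight \<pi> / (\<Sum>\<pi>'\<in>dpolicies S. weight \<pi>') else 0)"
    unfolding Xsoft_def using epow2_coherence
    by (intro arg_cong[where f = embed_pmf] ext) (auto intro!: sum.cong)
  then show ?thesis
    using finite_dpolicies sum_weight_pos by (simp add: pmf_embed_normalized weight_def)
qed

lemma set_pmf_Xsoft: "set_pmf (Xsoft S \<sigma> \<beta>) \<subseteq> dpolicies S"
  by (auto simp: set_pmf_iff pmf_Xsoft split: if_splits)

definition rest_sum :: "nat \<Rightarrow> ('m set \<Rightarrow> 'm) \<Rightarrow> 'm" where
  "rest_sum i \<pi> = (\<Sum>s\<in>set ss - {ss ! i}. \<pi> s)"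

definition update_kernel :: "nat \<Rightarrow> ('m set \<Rightarrow> 'm) \<Rightarrow> ('m set \<Rightarrow> 'm) \<Rightarrow> real" where
  "update_kernel i \<pi> \<pi>' = (if \<forall>s. s \<noteq> ss ! i \<longrightarrow> \<pi> s = \<pi>' s
      then pmf (sigma_pow \<sigma> \<beta> (rest_sum i \<pi>) (ss ! i)) (\<pi>' (ss ! i)) else 0)"

lemma nth_ss_in_contexts: "i < length ss \<Longrightarrow> ss ! i \<in> S"
  using set_ss nth_mem by blast

lemma pmf_gibbs_step:
  "pmf (gibbs_step ss \<sigma> \<beta> \<pi>) \<pi>' = (\<Sum>i<length ss. update_kernel i \<pi> \<pi>') / real (length ss)"
proof -
  have "{..<length ss} \<noteq> {}" using contexts_nonempty set_ss by auto
  then show ?thesis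
    unfolding gibbs_step_def update_kernel_def rest_sum_def
    by (subst pmf_bind_pmf_of_set) (auto simp: pmf_map_fun_upd)
qed

lemma set_pmf_gibbs_step:
  assumes "\<pi> \<in> dpolicies S"
  shows "set_pmf (gibbs_step ss \<sigma> \<beta> \<pi>) \<subseteq> dpolicies S"
proof
  fix \<rho> assume \<rho>: "\<rho> \<in> set_pmf (gibbs_step ss \<sigma> \<beta> \<pi>)"
  have "set_pmf (pmf_of_set {..<length ss}) = {..<length ss}"
    using contexts_nonempty set_ss by (intro set_pmf_of_set) auto
  with \<rho> obtain i a where i: "i < length ss" and \<rho>_eq: "\<rho> = \<pi>(ss ! i := a)"
      and a: "a \<in> set_pmf (sigma_pow \<sigma> \<beta> (rest_sum i \<pi>) (ss ! i))"
    unfolding gibbs_step_def rest_sum_def by auto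
  have "a \<in> ss ! i" using set_pmf_sigma_pow[OF nth_ss_in_contexts[OF i]] a by blast
  then have "\<pi>(ss ! i := a) \<in> (\<Pi>\<^sub>E s\<in>insert (ss ! i) S. s)"
    using assms unfolding dpolicies_def by (intro PiE_fun_upd) auto
  then show "\<rho> \<in> dpolicies S"
    unfolding \<rho>_eq dpolicies_def using nth_ss_in_contexts[OF i] by (simp add: insert_absorb)
qed

lemma set_pmf_gibbs_dist:
  assumes "\<pi>0 \<in> dpolicies S"
  shows "set_pmf (gibbs_dist ss \<sigma> \<beta> \<pi>0 t) \<subseteq> dpolicies S"
proof (induction t)
  case 0
  then show ?case using assms unfolding gibbs_dist_def by simp
next
  case (Suc t)
  then show ?case unfolding gibbs_dist_Suc using set_pmf_gibbs_step by (auto simp: set_bind_pmf)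
qed

lemma weight_split_context:
  assumes "i < length ss" and "\<pi> \<in> dpolicies S"
  shows "weight \<pi> = path_prob \<sigma> \<pi> 0 (remove1 (ss ! i) ss) powr \<beta>
                      * \<sigma> (rest_sum i \<pi>) (ss ! i) (\<pi> (ss ! i)) powr \<beta>"
proof -
  have "path_prob \<sigma> \<pi> 0 ss
      = path_prob \<sigma> \<pi> 0 (remove1 (ss ! i) ss) * \<sigma> (0 + rest_sum i \<pi>) (ss ! i) (\<pi> (ss ! i))"
    unfolding rest_sum_def
    by (rule path_prob_remove1_last[OF chain_rule_sigma dpolicy_in_context[OF assms(2)] distinct_ss])
      (simp_all add: set_ss nth_ss_in_contexts[OF assms(1)])
  moreover have "set (remove1 (ss ! i) ss) \<subseteq> S"
    unfolding set_ss[symmetric] by (rule set_remove1_subset)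
  then have "path_prob \<sigma> \<pi> 0 (remove1 (ss ! i) ss) \<ge> 0"
    by (intro path_prob_nonneg sigma_nonneg) blast
  ultimately show ?thesis
    unfolding weight_def using sigma_nonneg[OF nth_ss_in_contexts[OF assms(1)]] by (simp add: powr_mult)
qed

lemma update_kernel_detailed_balance:
  assumes "\<pi> \<in> dpolicies S" "\<pi>' \<in> dpolicies S" "i < length ss"
  shows "weight \<pi> * update_kernel i \<pi> \<pi>' = weight \<pi>' * update_kernel i \<pi>' \<pi>"
proof (cases "\<forall>s. s \<noteq> ss ! i \<longrightarrow> \<pi> s = \<pi>' s")
  case False
  then have "update_kernel i \<pi> \<pi>' = 0" "update_kernel i \<pi>' \<pi> = 0"
    unfolding update_kernel_def by auto
  then show ?thesis by simp
next
  case True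
  let ?c = "ss ! i"
  let ?Z = "\<Sum>a\<in>?c. \<sigma> (rest_sum i \<pi>) ?c a powr \<beta>"
  have c: "?c \<in> S" using nth_ss_in_contexts[OF assms(3)] .
  have True': "\<forall>s. s \<noteq> ?c \<longrightarrow> \<pi>' s = \<pi> s" using True by auto
  have rest_prob: "path_prob \<sigma> \<pi>' 0 (remove1 ?c ss) = path_prob \<sigma> \<pi> 0 (remove1 ?c ss)"
    using True distinct_ss by (intro path_prob_cong) auto
  have rest_sum_eq: "rest_sum i \<pi>' = rest_sum i \<pi>"
    unfolding rest_sum_def using True by (intro sum.cong) auto
  have k: "update_kernel i \<pi> \<pi>' = \<sigma> (rest_sum i \<pi>) ?c (\<pi>' ?c) powr \<beta> / ?Z"
    unfolding update_kernel_def using True dpolicy_in_context[OF assms(2) c]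
    by (simp add: pmf_sigma_pow[OF c])
  have k': "update_kernel i \<pi>' \<pi> = \<sigma> (rest_sum i \<pi>) ?c (\<pi> ?c) powr \<beta> / ?Z"
    unfolding update_kernel_def rest_sum_eq using True' dpolicy_in_context[OF assms(1) c]
    by (simp add: pmf_sigma_pow[OF c])
  show ?thesis
    unfolding weight_split_context[OF assms(3,1)] weight_split_context[OF assms(3,2)] k k' rest_prob rest_sum_eq
    by (simp add: ac_simps)
qed

lemma gibbs_step_detailed_balance:
  assumes "\<pi> \<in> dpolicies S" "\<pi>' \<in> dpolicies S"
  shows "pmf (Xsoft S \<sigma> \<beta>) \<pi> * pmf (gibbs_step ss \<sigma> \<beta> \<pi>) \<pi>'
           = pmf (Xsoft S \<sigma> \<beta>) \<pi>' * pmf (gibbs_step ss \<sigma> \<beta> \<pi>') \<pi>"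
proof -
  let ?Z = "(\<Sum>\<rho>\<in>dpolicies S. weight \<rho>) * real (length ss)"
  have "pmf (Xsoft S \<sigma> \<beta>) \<pi> * pmf (gibbs_step ss \<sigma> \<beta> \<pi>) \<pi>'
      = weight \<pi> * (\<Sum>i<length ss. update_kernel i \<pi> \<pi>') / ?Z"
    using assms(1) unfolding pmf_Xsoft pmf_gibbs_step by simp
  also have "\<dots> = (\<Sum>i<length ss. weight \<pi> * update_kernel i \<pi> \<pi>') / ?Z"
    by (simp add: sum_distrib_left)
  also have "\<dots> = (\<Sum>i<length ss. weight \<pi>' * update_kernel i \<pi>' \<pi>) / ?Z"
    using update_kernel_detailed_balance[OF assms] by simp
  also have "\<dots> = weight \<pi>' * (\<Sum>i<length ss. update_kernel i \<pi>' \<pi>) / ?Z"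
    by (simp add: sum_distrib_left)
  also have "\<dots> = pmf (Xsoft S \<sigma> \<beta>) \<pi>' * pmf (gibbs_step ss \<sigma> \<beta> \<pi>') \<pi>"
    using assms(2) unfolding pmf_Xsoft pmf_gibbs_step by simp
  finally show ?thesis .
qed

lemma gibbs_step_irreducible:
  assumes erg: "ergodic S \<sigma>"
    and C: "C \<subseteq> dpolicies S" "C \<noteq> {}" "C \<noteq> dpolicies S"
  shows "\<exists>\<pi>\<in>C. \<exists>\<pi>'\<in>dpolicies S - C. pmf (gibbs_step ss \<sigma> \<beta> \<pi>) \<pi>' > 0"
proof -
  obtain \<pi> \<pi>' sd where h: "\<pi> \<in> C" "\<pi>' \<in> dpolicies S - C" "sd \<in> S"
    "\<forall>s\<in>S - {sd}. \<pi> s = \<pi>' s" "\<sigma> (\<Sum>s\<in>S - {sd}. \<pi> s) sd (\<pi>' sd) > 0"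
    using erg[unfolded ergodic_def, rule_format, OF C] by blast
  have "sd \<in> set ss" using h(3) set_ss by simp
  then obtain i where i: "i < length ss" "ss ! i = sd" by (auto simp: in_set_conv_nth)
  have \<pi>: "\<pi> \<in> dpolicies S" and \<pi>': "\<pi>' \<in> dpolicies S" using h C by auto
  have agree: "\<forall>s. s \<noteq> ss ! i \<longrightarrow> \<pi> s = \<pi>' s"
    using dpolicies_eq_outside[OF \<pi> \<pi>' h(4)] i(2) by simp
  have rest_sum_eq: "rest_sum i \<pi> = (\<Sum>s\<in>S - {sd}. \<pi> s)"
    using i(2) set_ss by (simp add: rest_sum_def)
  have num: "0 < \<sigma> (rest_sum i \<pi>) sd (\<pi>' sd) powr \<beta>"
    using h(5) unfolding rest_sum_eq by simp
  also have "\<dots> \<le> (\<Sum>a\<in>sd. \<sigma> (rest_sum i \<pi>) sd a powr \<beta>)"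
    using finite_context[OF h(3)] dpolicy_in_context[OF \<pi>' h(3)] by (intro member_le_sum) auto
  finally have den: "0 < (\<Sum>a\<in>sd. \<sigma> (rest_sum i \<pi>) sd a powr \<beta>)" .
  have "update_kernel i \<pi> \<pi>'
      = \<sigma> (rest_sum i \<pi>) sd (\<pi>' sd) powr \<beta> / (\<Sum>a\<in>sd. \<sigma> (rest_sum i \<pi>) sd a powr \<beta>)"
    unfolding update_kernel_def using agree i(2) dpolicy_in_context[OF \<pi>' h(3)]
    by (simp add: pmf_sigma_pow[OF h(3)])
  then have "update_kernel i \<pi> \<pi>' > 0" using num den by simp
  moreover have "update_kernel i \<pi> \<pi>' \<le> (\<Sum>j<length ss. update_kernel j \<pi> \<pi>')"
    using i(1) by (intro member_le_sum) (auto simp: update_kernel_def)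
  ultimately have "(\<Sum>j<length ss. update_kernel j \<pi> \<pi>') > 0" by linarith
  then have "pmf (gibbs_step ss \<sigma> \<beta> \<pi>) \<pi>' > 0"
    unfolding pmf_gibbs_step using i(1) by (intro divide_pos_pos) auto
  then show ?thesis using h by blast
qed

lemma gibbs_step_stationary_irreducible:
  assumes "ergodic S \<sigma>"
  shows "stationary_irreducible_kernel (dpolicies S) (\<lambda>\<pi>. pmf (gibbs_step ss \<sigma> \<beta> \<pi>)) (pmf (Xsoft S \<sigma> \<beta>))"
proof
  show "finite (dpolicies S)" by (rule finite_dpolicies)
  show "pmf (gibbs_step ss \<sigma> \<beta> \<pi>) \<pi>' \<ge> 0" for \<pi> \<pi>' by (rule pmf_nonneg)
  show "pmf (Xsoft S \<sigma> \<beta>) \<pi> \<ge> 0" for \<pi> by (rule pmf_nonneg)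
  show "(\<Sum>\<pi>\<in>dpolicies S. pmf (Xsoft S \<sigma> \<beta>) \<pi>) = 1"
    by (intro sum_pmf_eq_1 finite_dpolicies set_pmf_Xsoft)
  show "(\<Sum>\<pi>\<in>dpolicies S. pmf (Xsoft S \<sigma> \<beta>) \<pi> * pmf (gibbs_step ss \<sigma> \<beta> \<pi>) \<pi>')
          = pmf (Xsoft S \<sigma> \<beta>) \<pi>'" if "\<pi>' \<in> dpolicies S" for \<pi>'
  proof (rule stationary_if_detailed_balance[where K = "\<lambda>\<pi>. pmf (gibbs_step ss \<sigma> \<beta> \<pi>)"])
    show "(\<Sum>\<rho>\<in>dpolicies S. pmf (gibbs_step ss \<sigma> \<beta> \<pi>) \<rho>) = 1" if "\<pi> \<in> dpolicies S" for \<pi>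
      using that by (intro sum_pmf_eq_1 finite_dpolicies set_pmf_gibbs_step)
    show "pmf (Xsoft S \<sigma> \<beta>) \<pi> * pmf (gibbs_step ss \<sigma> \<beta> \<pi>) \<rho>
            = pmf (Xsoft S \<sigma> \<beta>) \<rho> * pmf (gibbs_step ss \<sigma> \<beta> \<rho>) \<pi>"
      if "\<pi> \<in> dpolicies S" "\<rho> \<in> dpolicies S" for \<pi> \<rho>
      using that by (rule gibbs_step_detailed_balance)
  qed (rule that)
  show "\<exists>\<pi>\<in>C. \<exists>\<pi>'\<in>dpolicies S - C. pmf (gibbs_step ss \<sigma> \<beta> \<pi>) \<pi>' > 0"
    if "C \<subseteq> dpolicies S" "C \<noteq> {}" "C \<noteq> dpolicies S" for C
    using gibbs_step_irreducible[OF assms that] .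
qed

lemma gibbs_avg_tendsto_Xsoft:
  assumes "ergodic S \<sigma>" and "\<pi>0 \<in> dpolicies S"
  shows "(\<lambda>N. pmf (gibbs_avg ss \<sigma> \<beta> \<pi>0 N) \<pi>) \<longlonglongrightarrow> pmf (Xsoft S \<sigma> \<beta>) \<pi>"
proof (cases "\<pi> \<in> dpolicies S")
  case True
  interpret stationary_irreducible_kernel "dpolicies S"
    "\<lambda>\<pi>. pmf (gibbs_step ss \<sigma> \<beta> \<pi>)" "pmf (Xsoft S \<sigma> \<beta>)"
    by (rule gibbs_step_stationary_irreducible[OF assms(1)])
  show ?thesis
    unfolding pmf_gibbs_avg
  proof (rule cesaro_tendsto_stationary[where \<mu> = "\<lambda>t. pmf (gibbs_dist ss \<sigma> \<beta> \<pi>0 t)"])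
    show "(\<Sum>\<rho>\<in>dpolicies S. pmf (gibbs_dist ss \<sigma> \<beta> \<pi>0 t) \<rho>) = 1" for t
      by (intro sum_pmf_eq_1 finite_dpolicies set_pmf_gibbs_dist assms(2))
    show "pmf (gibbs_dist ss \<sigma> \<beta> \<pi>0 (Suc t)) \<rho>
            = (\<Sum>\<pi>\<in>dpolicies S. pmf (gibbs_dist ss \<sigma> \<beta> \<pi>0 t) \<pi> * pmf (gibbs_step ss \<sigma> \<beta> \<pi>) \<rho>)" for t \<rho>
      unfolding gibbs_dist_Suc by (intro pmf_bind_finite_support finite_dpolicies set_pmf_gibbs_dist assms(2))
  qed (simp_all add: True)
next
  case False
  have "set_pmf (gibbs_avg ss \<sigma> \<beta> \<pi>0 N) \<subseteq> dpolicies S" for N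
    unfolding gibbs_avg_def using set_pmf_gibbs_dist[OF assms(2)] by (auto simp: set_bind_pmf)
  then have "pmf (gibbs_avg ss \<sigma> \<beta> \<pi>0 N) \<pi> = 0" for N
    using False by (meson pmf_eq_0_set_pmf subsetD)
  then show ?thesis using False by (simp add: pmf_Xsoft)
qed

end

lemma generated_Union_contexts: "learning_system A S \<sigma> \<Longrightarrow> generated (\<Union>S) = UNIV"
  unfolding learning_system_def by (elim conjE) simp

lemma generated_empty: "generated {} = {0}"
proof
  show "generated {} \<subseteq> {0}" by (auto elim: generated.cases)
qed (simp add: generated.gen_zero)

lemma trivial_if_no_contexts:
  fixes A :: "'m::comm_monoid_add set"
  assumes "learning_system A {} \<sigma>"
  shows "(x :: 'm) = 0"
proof -
  have "generated {} = (UNIV :: 'm set)" using generated_Union_contexts[OF assms] by simp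
  then show ?thesis unfolding generated_empty by blast
qed

theorem mainTheorem3:
  fixes A :: "'m::comm_monoid_add set" and S :: "'m set set"
    and \<sigma> :: "'m \<Rightarrow> 'm set \<Rightarrow> 'm \<Rightarrow> real"
    and ss :: "'m set list" and \<pi>0 :: "'m set \<Rightarrow> 'm" and \<beta> :: real
  assumes "learning_system A S \<sigma>"
    and "ergodic S \<sigma>"
    and "distinct ss" and "set ss = S"
    and "\<pi>0 \<in> dpolicies S"
    and "\<beta> > 0"
  shows "\<forall>\<pi>. (\<lambda>N. pmf (gibbs_avg ss \<sigma> \<beta> \<pi>0 N) \<pi>) \<longlonglongrightarrow> pmf (Xsoft S \<sigma> \<beta>) \<pi>"
proof (cases "S = {}")
  case True
  \<comment> \<open>Here \<open>gibbs_step\<close> samples from the junk \<open>pmf_of_set {}\<close>, but there is only one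
      d-policy: a monoid generated by the empty set is trivial.\<close>
  note trivial = trivial_if_no_contexts[OF assms(1)[unfolded True]]
  have "\<pi>' = \<pi>" for \<pi> \<pi>' :: "'m set \<Rightarrow> 'm"
  proof
    show "\<pi>' s = \<pi> s" for s using trivial[where x = "\<pi>' s"] trivial[where x = "\<pi> s"] by simp
  qed
  from pmf_eq_1_if_subsingleton[OF this] show ?thesis by simp
next
  case False
  interpret gibbs_sampler A S \<sigma> ss \<beta>
    by unfold_locales (use assms False in auto)
  show ?thesis using gibbs_avg_tendsto_Xsoft assms(2,5) by blast
qed

end
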